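(* For every $n\ge1$, $\mathcal{C}(T^{mb}_n)=c_n$; that is, the maximally balanced tree with $n$ leaves has the minimum Colless index among all bifurcating trees with $n$ leaves.
   Context: Bifurcating trees: rooted trees in which every internal node has exactly two children; $\mathcal{T}_n$ is the set of isomorphism classes of bifurcating trees with $n$ leaves. For a node $w$, $\kappa_T(w)$ is its number of descendant leaves. The Colless index is $\mathcal{C}(T)=\sum_{v}|\kappa_T(v_1)-\kappa_T(v_2)|$, summed over internal nodes $v$ with children $v_1,v_2$; $c_n=\min\{\mathcal{C}(T):T\in\mathcal{T}_n\}$. A bifurcating tree is maximally balanced if for every internal node the numbers of descendant leaves of its two children differ by at most 1; $T^{mb}_n$ denotes the unique maximally balanced tree with $n$ leaves. *)

theory Defs
  imports Main
begin

text \<open>Rooted bifurcating trees (plane representatives; isomorphism classes are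
  obtained by identifying trees up to swapping children, and all notions below
  are invariant under such swaps).\<close>
datatype btree = Leaf | Node btree btree

fun leaves :: "btree \<Rightarrow> nat" where
  "leaves Leaf = 1"
| "leaves (Node l r) = leaves l + leaves r"

fun colless :: "btree \<Rightarrow> nat" where
  "colless Leaf = 0"
| "colless (Node l r) =
     nat \<bar>int (leaves l) - int (leaves r)\<bar> + colless l + colless r"

definition min_colless :: "nat \<Rightarrow> nat" where
  "min_colless n = Min {colless T | T. leaves T = n}"

fun max_balanced :: "btree \<Rightarrow> bool" where
  "max_balanced Leaf = True"
| "max_balanced (Node l r) =
     (\<bar>int (leaves l) - int (leaves r)\<bar> \<le> 1 \<and> max_balanced l \<and> max_balanced r)"

end

theory Submission
  imports Defs
begin

text \<open>The Colless index of the maximally balanced tree with \<open>n\<close> leaves satisfies the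
  recurrence \<open>c n = n mod 2 + c \<lfloor>n/2\<rfloor> + c \<lceil>n/2\<rceil>\<close>.  Minimality rests on the split
  inequality \<open>c (a + b) \<le> \<bar>a - b\<bar> + c a + c b\<close>: applied at the root, it gives
  \<open>c (leaves T) \<le> colless T\<close> for every tree by induction on \<open>T\<close>.  The split inequality
  is proved by strong induction on \<open>a + b\<close>: the halves of \<open>a + b\<close> are sums of halves of
  \<open>a\<close> and \<open>b\<close>, paired according to the parities of \<open>a\<close> and \<open>b\<close>.\<close>

function balanced_colless :: "nat \<Rightarrow> nat" where
  "balanced_colless n =
     (if n \<le> 1 then 0
      else n mod 2 + balanced_colless (n div 2) + balanced_colless ((n + 1) div 2))"
  by auto
termination by (relation "measure id") auto

declare balanced_colless.simps [simp del]

lemma balanced_colless_0 [simp]: "balanced_colless 0 = 0"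
  and balanced_colless_1 [simp]: "balanced_colless (Suc 0) = 0"
  by (simp_all add: balanced_colless.simps)

lemma balanced_colless_double: "balanced_colless (2 * m) = 2 * balanced_colless m"
  by (cases "m = 0") (subst balanced_colless.simps; auto)+

lemma balanced_colless_odd:
  "0 < m \<Longrightarrow> balanced_colless (2 * m + 1) = 1 + balanced_colless m + balanced_colless (m + 1)"
  by (subst balanced_colless.simps) auto

lemma leaves_pos: "0 < leaves T"
  by (induction T) auto

lemma colless_max_balanced:
  "max_balanced T \<Longrightarrow> colless T = balanced_colless (leaves T)"
proof (induction T)
  case Leaf
  then show ?case by simp
next
  case (Node l r)
  let ?n = "leaves l + leaves r"
  have "leaves l = leaves r \<or> leaves l = leaves r + 1 \<or> leaves r = leaves l + 1"
    using Node.prems by auto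
  then have "{leaves l, leaves r} = {?n div 2, (?n + 1) div 2}"
    and "nat \<bar>int (leaves l) - int (leaves r)\<bar> = ?n mod 2"
    by auto presburger+
  moreover have "balanced_colless ?n =
      ?n mod 2 + balanced_colless (?n div 2) + balanced_colless ((?n + 1) div 2)"
    using leaves_pos [of l] leaves_pos [of r] by (subst balanced_colless.simps) auto
  ultimately show ?case
    using Node by (auto simp: doubleton_eq_iff)
qed

lemma balanced_colless_split_le_even_even:
  assumes "balanced_colless (p + q) \<le>
      nat \<bar>int p - int q\<bar> + balanced_colless p + balanced_colless q"
  shows "balanced_colless (2 * p + 2 * q) \<le>
      nat \<bar>int (2 * p) - int (2 * q)\<bar> + balanced_colless (2 * p) + balanced_colless (2 * q)"
proof -
  have "2 * p + 2 * q = 2 * (p + q)" by simp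
  moreover have "nat \<bar>int (2 * p) - int (2 * q)\<bar> = 2 * nat \<bar>int p - int q\<bar>" by arith
  ultimately show ?thesis
    using assms by (simp only: balanced_colless_double)
qed

lemma balanced_colless_split_le_odd_odd:
  assumes IH1: "balanced_colless (p + 1 + q) \<le>
      nat \<bar>int (p + 1) - int q\<bar> + balanced_colless (p + 1) + balanced_colless q"
    and IH2: "balanced_colless (p + (q + 1)) \<le>
      nat \<bar>int p - int (q + 1)\<bar> + balanced_colless p + balanced_colless (q + 1)"
  shows "balanced_colless ((2 * p + 1) + (2 * q + 1)) \<le> nat \<bar>int (2 * p + 1) - int (2 * q + 1)\<bar> +
      balanced_colless (2 * p + 1) + balanced_colless (2 * q + 1)"
proof -
  have "(2 * p + 1) + (2 * q + 1) = 2 * (p + q + 1)" by simp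
  then have "balanced_colless ((2 * p + 1) + (2 * q + 1)) = 2 * balanced_colless (p + q + 1)"
    by (simp only: balanced_colless_double)
  also have "\<dots> = balanced_colless (p + 1 + q) + balanced_colless (p + (q + 1))"
    by simp
  finally have "balanced_colless ((2 * p + 1) + (2 * q + 1)) =
      balanced_colless (p + 1 + q) + balanced_colless (p + (q + 1))" .
  moreover have "nat \<bar>int (p + 1) - int q\<bar> + nat \<bar>int p - int (q + 1)\<bar> \<le>
      nat \<bar>int (2 * p + 1) - int (2 * q + 1)\<bar> + 2"
    by arith
  ultimately show ?thesis
    using IH1 IH2 balanced_colless_odd [of p] balanced_colless_odd [of q]
    by (cases "p = 0"; cases "q = 0") auto
qed

lemma balanced_colless_split_le_odd_even:
  assumes pq: "0 < p + q"
    and IH1: "balanced_colless (p + 1 + q) \<le>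
      nat \<bar>int (p + 1) - int q\<bar> + balanced_colless (p + 1) + balanced_colless q"
    and IH2: "balanced_colless (p + q) \<le>
      nat \<bar>int p - int q\<bar> + balanced_colless p + balanced_colless q"
  shows "balanced_colless ((2 * p + 1) + 2 * q) \<le>
      nat \<bar>int (2 * p + 1) - int (2 * q)\<bar> + balanced_colless (2 * p + 1) + balanced_colless (2 * q)"
proof -
  have split: "balanced_colless ((2 * p + 1) + 2 * q) =
      1 + balanced_colless (p + q) + balanced_colless (p + 1 + q)"
    using balanced_colless_odd [OF pq] by (simp add: algebra_simps)
  show ?thesis
  proof (cases "p = 0")
    case True
    then show ?thesis
      using split IH1 pq by (simp add: balanced_colless_double)
  next
    case False
    have "nat \<bar>int (2 * p + 1) - int (2 * q)\<bar> = nat \<bar>int (p + 1) - int q\<bar> + nat \<bar>int p - int q\<bar>"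
      by arith
    then show ?thesis
      using split IH1 IH2 balanced_colless_odd [of p] False by (simp add: balanced_colless_double)
  qed
qed

lemma balanced_colless_split_le:
  "balanced_colless (a + b) \<le> nat \<bar>int a - int b\<bar> + balanced_colless a + balanced_colless b"
proof (induction "a + b" arbitrary: a b rule: less_induct)
  case less
  note IH = less.hyps
  have odd_even: "balanced_colless (x + y) \<le>
      nat \<bar>int x - int y\<bar> + balanced_colless x + balanced_colless y"
    if "odd x" "even y" "x + y = a + b" "1 < a + b" for x y
  proof -
    obtain p where p: "x = 2 * p + 1" using \<open>odd x\<close> by (rule oddE)
    obtain q where q: "y = 2 * q" using \<open>even y\<close> by (rule evenE)
    show ?thesis
      unfolding p q
      by (rule balanced_colless_split_le_odd_even; (rule IH)?) (use p q that in linarith)+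
  qed
  consider "a + b \<le> 1" | "even a" "even b" "1 < a + b" | "odd a" "odd b"
    | "odd a" "even b" "1 < a + b" | "even a" "odd b" "1 < a + b"
    by fastforce
  then show ?case
  proof cases
    case 1
    then show ?thesis by (auto simp: le_Suc_eq)
  next
    case 2
    obtain p where p: "a = 2 * p" using \<open>even a\<close> by (rule evenE)
    obtain q where q: "b = 2 * q" using \<open>even b\<close> by (rule evenE)
    show ?thesis
      unfolding p q
      by (rule balanced_colless_split_le_even_even, rule IH) (use p q 2 in linarith)
  next
    case 3
    obtain p where p: "a = 2 * p + 1" using \<open>odd a\<close> by (rule oddE)
    obtain q where q: "b = 2 * q + 1" using \<open>odd b\<close> by (rule oddE)
    show ?thesis
      unfolding p q
      by (rule balanced_colless_split_le_odd_odd; rule IH) (use p q in linarith)+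
  next
    case 4
    then show ?thesis by (intro odd_even) simp_all
  next
    case 5
    then show ?thesis
      using odd_even [of b a] by (simp add: add.commute abs_minus_commute)
  qed
qed

lemma balanced_colless_le_colless: "balanced_colless (leaves T) \<le> colless T"
proof (induction T)
  case Leaf
  then show ?case by simp
next
  case (Node l r)
  then show ?case
    using balanced_colless_split_le [of "leaves l" "leaves r"] by simp
qed

lemma colless_le_square: "colless T \<le> leaves T * leaves T"
proof (induction T)
  case Leaf
  then show ?case by simp
next
  case (Node l r)
  have "leaves l \<le> leaves l * leaves r" "leaves r \<le> leaves l * leaves r"
    using leaves_pos [of l] leaves_pos [of r] by simp_all
  then have "nat \<bar>int (leaves l) - int (leaves r)\<bar> \<le> 2 * leaves l * leaves r"
    by linarith
  then show ?case
    using Node by (simp add: algebra_simps)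
qed

theorem theorem1:
  fixes n :: nat and T :: btree
  assumes "n \<ge> 1" and "leaves T = n" and "max_balanced T"
  shows "colless T = min_colless n"
proof -
  let ?S = "{colless T | T. leaves T = n}"
  have "finite ?S"
    by (rule finite_subset [of _ "{..n * n}"]) (auto intro: colless_le_square [THEN order_trans])
  moreover have "colless T \<in> ?S"
    using assms(2) by auto
  moreover have "colless T \<le> colless T'" if "leaves T' = n" for T'
    using colless_max_balanced [OF assms(3)] balanced_colless_le_colless [of T'] assms(2) that
    by simp
  ultimately have "Min ?S = colless T"
    by (intro Min_eqI) auto
  then show ?thesis
    unfolding min_colless_def by simp
qed

end
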